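(* Let $s>0$, $\beta>1$, $\gamma>0$ and let $\eta_N(z)=\eta_0\zeta(z/N)$, $z\in[0,N]$, be a fractional learning-rate schedule with power-decay tail of exponent $\gamma$ (constants $\delta\in(0,1)$ as in the definition). Let $\alpha=\min\{\beta,\gamma+1\}$ and $T_N=\eta_0N\int_0^1\zeta(x)dx$. Define $$\mathcal F[\eta_N]:=(1+T_N)^{-s}+\int_0^{T_N}\mathcal K(T_N-\tau)\varphi(\tau)\,d\tau,\qquad \mathcal K(u)=(1+u)^{-(2-1/\beta)},$$ where $\varphi(\tau)=\eta_N(z(\tau))$ is the learning rate in intrinsic time. Then for all $T_N\ge 2$, $$\mathcal F[\eta_N]\eqsim T_N^{-s}+\eta_0\,T_N^{-(1-\frac1\alpha)}\,(\log T_N)^{\mathbf 1\{\beta=\gamma+1\}},$$ with implicit constants depending only on $s,\beta,\zeta$ (not on $N$ or $\eta_0$).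
   Context: A fractional LRS with power-decay tail: $\eta_N(z)=\eta_0\zeta(z/N)$ with $\eta_0>0$ and a measurable profile $\zeta:[0,1]\to[0,1]$ with $\zeta(0)=1$, such that there exist $\gamma>0$, $\delta\in(0,1)$ with $\zeta(x)\eqsim(1-x)^\gamma$ for all $x\in[\delta,1]$. The intrinsic time is $t(z)=\int_0^z\eta_N(u)du$, so $T_N=t(N)$; $z(\cdot)$ denotes a generalized inverse of $t(\cdot)$ on $[0,T_N]$, and $\varphi(\tau):=\eta_N(z(\tau))$. $\mathbf 1\{\cdot\}$ is the indicator. $f\eqsim g$ means two-sided bounds up to positive multiplicative constants. *)

theory Defs
  imports "HOL-Analysis.Analysis"
begin

definition lrs_profile :: "(real \<Rightarrow> real) \<Rightarrow> bool" where
  "lrs_profile \<zeta> \<longleftrightarrow> set_borel_measurable lborel {0..1} \<zeta> \<and>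
     (\<forall>x\<in>{0..1}. 0 \<le> \<zeta> x \<and> \<zeta> x \<le> 1) \<and> \<zeta> 0 = 1"

definition power_decay_tail :: "(real \<Rightarrow> real) \<Rightarrow> real \<Rightarrow> real \<Rightarrow> bool" where
  "power_decay_tail \<zeta> \<gamma> \<delta> \<longleftrightarrow> 0 < \<delta> \<and> \<delta> < 1 \<and>
     (\<exists>c1 c2. 0 < c1 \<and> 0 < c2 \<and>
        (\<forall>x\<in>{\<delta>..1}. c1 * (1 - x) powr \<gamma> \<le> \<zeta> x \<and> \<zeta> x \<le> c2 * (1 - x) powr \<gamma>))"

definition lrs_eta :: "real \<Rightarrow> (real \<Rightarrow> real) \<Rightarrow> nat \<Rightarrow> real \<Rightarrow> real" where
  "lrs_eta \<eta>0 \<zeta> N z = \<eta>0 * \<zeta> (z / real N)"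

definition lrs_time :: "real \<Rightarrow> (real \<Rightarrow> real) \<Rightarrow> nat \<Rightarrow> real \<Rightarrow> real" where
  "lrs_time \<eta>0 \<zeta> N z = (LINT u:{0..z}|lborel. lrs_eta \<eta>0 \<zeta> N u)"

definition lrs_T :: "real \<Rightarrow> (real \<Rightarrow> real) \<Rightarrow> nat \<Rightarrow> real" where
  "lrs_T \<eta>0 \<zeta> N = lrs_time \<eta>0 \<zeta> N (real N)"

text \<open>Generalized (left-continuous) inverse of t on [0,T_N].\<close>
definition lrs_zinv :: "real \<Rightarrow> (real \<Rightarrow> real) \<Rightarrow> nat \<Rightarrow> real \<Rightarrow> real" where
  "lrs_zinv \<eta>0 \<zeta> N \<tau> = Inf {z \<in> {0..real N}. \<tau> \<le> lrs_time \<eta>0 \<zeta> N z}"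

definition lrs_phi :: "real \<Rightarrow> (real \<Rightarrow> real) \<Rightarrow> nat \<Rightarrow> real \<Rightarrow> real" where
  "lrs_phi \<eta>0 \<zeta> N \<tau> = lrs_eta \<eta>0 \<zeta> N (lrs_zinv \<eta>0 \<zeta> N \<tau>)"

definition lrs_K :: "real \<Rightarrow> real \<Rightarrow> real" where
  "lrs_K \<beta> u = (1 + u) powr (-(2 - 1 / \<beta>))"

definition lrs_F :: "real \<Rightarrow> real \<Rightarrow> real \<Rightarrow> (real \<Rightarrow> real) \<Rightarrow> nat \<Rightarrow> real" where
  "lrs_F s \<beta> \<eta>0 \<zeta> N =
     (let T = lrs_T \<eta>0 \<zeta> N in
      (1 + T) powr (-s) + (LINT \<tau>:{0..T}|lborel. lrs_K \<beta> (T - \<tau>) * lrs_phi \<eta>0 \<zeta> N \<tau>))"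

end

(*
  Write w = T_N - tau for the intrinsic time still to run. On the tail [delta N, N] the schedule
  behaves like eta0 (1 - z/N)^gamma, so the intrinsic time left after step z is comparable to
  eta0 N (1 - z/N)^(gamma + 1), while eta0 N itself is comparable to T_N. Inverting, phi(tau) is at
  most a constant times eta0 (w / T_N)^(gamma / (gamma + 1)) everywhere, and at least such a multiple
  on a final window w <= c T_N. Against the kernel, the integral is therefore comparable to
  eta0 T_N^(-gamma / (gamma + 1)) times the integral of (1 + w)^e over w up to order T_N, where
  e + 1 = 1/beta - 1/(gamma + 1). That integral is bounded for beta > gamma + 1, logarithmic for
  beta = gamma + 1 and of order T_N^(e + 1) for beta < gamma + 1, which produces the exponent
  1 - 1/alpha and the logarithmic factor. Finally (1 + T_N)^(-s) is comparable to T_N^(-s) as T_N >= 2.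
*)

theory Submission
  imports Defs
begin

lemma set_integrable_Icc_bounded:
  fixes f :: "real \<Rightarrow> real"
  assumes meas: "(\<lambda>x. indicator {a..b} x * f x) \<in> borel_measurable borel"
    and bound: "\<And>x. x \<in> {a..b} \<Longrightarrow> \<bar>f x\<bar> \<le> B"
  shows "set_integrable lborel {a..b} f"
  unfolding set_integrable_def
proof (rule integrableI_bounded_set[where A="{a..b}" and B=B])
  show "emeasure lborel {a..b} < \<infinity>"
    by (cases "a \<le> b") (auto simp: emeasure_lborel_Icc_eq)
  show "AE x in lborel. x \<in> {a..b} \<longrightarrow> norm (indicator {a..b} x *\<^sub>R f x) \<le> B"
    using bound by (auto simp: indicator_def)
qed (use meas in auto)

lemma continuous_on_superlevel_Inf:
  fixes F :: "real \<Rightarrow> real"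
  assumes cont: "continuous_on {a..b} F" and "a \<le> b" "F a \<le> \<tau>" "\<tau> \<le> F b"
  shows "Inf {x \<in> {a..b}. \<tau> \<le> F x} \<in> {a..b} \<and> F (Inf {x \<in> {a..b}. \<tau> \<le> F x}) = \<tau>"
proof -
  define S where "S = {x \<in> {a..b}. \<tau> \<le> F x}"
  have "b \<in> S" using assms by (simp add: S_def)
  have bdd: "bdd_below S" by (auto simp: S_def bdd_below_def)
  have "S = {a..b} \<inter> F -` {\<tau>..}" by (auto simp: S_def)
  then have "closed S" using continuous_closed_preimage[OF cont] by simp
  then have "Inf S \<in> S" using closed_contains_Inf bdd \<open>b \<in> S\<close> by blast
  then have z: "Inf S \<in> {a..b}" "\<tau> \<le> F (Inf S)" by (auto simp: S_def)
  have "continuous_on {a..Inf S} F" by (rule continuous_on_subset[OF cont]) (use z in auto)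
  then obtain x where x: "a \<le> x" "x \<le> Inf S" "F x = \<tau>"
    using IVT'[of F a \<tau> "Inf S"] z assms by auto
  then have "x \<in> S" using z by (auto simp: S_def)
  then have "x = Inf S" using cInf_lower[OF _ bdd] x by fastforce
  then show ?thesis using z x by (simp add: S_def)
qed

lemma superlevel_Inf_mono:
  fixes F :: "real \<Rightarrow> real"
  assumes "\<tau>1 \<le> \<tau>2" "\<tau>2 \<le> F b" "a \<le> b"
  shows "Inf {x \<in> {a..b}. \<tau>1 \<le> F x} \<le> Inf {x \<in> {a..b}. \<tau>2 \<le> F x}"
  by (rule cInf_superset_mono) (use assms in \<open>auto simp: bdd_below_def\<close>)

lemma has_integral_one_minus_div_powr:
  fixes L p z :: real
  assumes "0 < L" "0 < p + 1" "0 \<le> z" "z \<le> L"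
  shows "((\<lambda>u. (1 - u / L) powr p) has_integral L * (1 - z / L) powr (p + 1) / (p + 1)) {z..L}"
proof -
  define F where "F = (\<lambda>u. - (L * (1 - u / L) powr (p + 1) / (p + 1)))"
  have "((\<lambda>u. (1 - u / L) powr p) has_integral (F L - F z)) {z..L}"
  proof (rule fundamental_theorem_of_calculus_interior)
    show "continuous_on {z..L} F" unfolding F_def
      using assms by (intro continuous_intros continuous_on_powr') (auto simp: field_simps)
    fix x assume x: "x \<in> {z<..<L}"
    then have pos: "0 < 1 - x / L" using assms by (auto simp: field_simps)
    have "((\<lambda>u. 1 - u / L) has_real_derivative (- 1 / L)) (at x)"
      using assms by (auto intro!: derivative_eq_intros)
    from DERIV_fun_powr[OF this pos, of "p + 1"]
    have "((\<lambda>u. (1 - u / L) powr (p + 1)) has_real_derivative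
            (p + 1) * (1 - x / L) powr p * (- 1 / L)) (at x)"
      by simp
    then have "(F has_real_derivative - (L * ((p + 1) * (1 - x / L) powr p * (- 1 / L)) / (p + 1))) (at x)"
      unfolding F_def by (intro DERIV_minus DERIV_cdivide DERIV_cmult)
    moreover have "L * ((p + 1) * (1 - x / L) powr p * (- 1 / L)) = - ((p + 1) * (1 - x / L) powr p)"
      using assms by simp
    then have "- (L * ((p + 1) * (1 - x / L) powr p * (- 1 / L)) / (p + 1)) = (1 - x / L) powr p"
      using assms by simp
    ultimately show "(F has_vector_derivative (1 - x / L) powr p) (at x)"
      by (simp add: has_real_derivative_iff_has_vector_derivative)
  qed (use assms in simp)
  moreover have "F L - F z = L * (1 - z / L) powr (p + 1) / (p + 1)"
    using assms by (simp add: F_def)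
  ultimately show ?thesis by simp
qed

definition shifted_powr_primitive :: "real \<Rightarrow> real \<Rightarrow> real" where
  "shifted_powr_primitive e X = (if e = -1 then ln (1 + X) else (1 + X) powr (e + 1) / (e + 1))"

lemma has_integral_shifted_powr_reflected:
  fixes T e X1 X2 :: real
  assumes "0 \<le> X1" "X1 \<le> X2"
  shows "((\<lambda>\<tau>. (1 + T - \<tau>) powr e) has_integral
           (shifted_powr_primitive e X2 - shifted_powr_primitive e X1)) {T - X2..T - X1}"
proof -
  define A where "A = (\<lambda>\<tau>. - shifted_powr_primitive e (T - \<tau>))"
  have "((\<lambda>\<tau>. (1 + T - \<tau>) powr e) has_integral (A (T - X1) - A (T - X2))) {T - X2..T - X1}"
  proof (rule fundamental_theorem_of_calculus_interior)
    show "continuous_on {T - X2..T - X1} A"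
      unfolding A_def shifted_powr_primitive_def using assms
      by (cases "e = -1") (auto intro!: continuous_intros)
    fix x assume x: "x \<in> {T - X2<..<T - X1}"
    then have pos: "0 < 1 + (T - x)" using assms by simp
    have inner: "((\<lambda>\<tau>. 1 + (T - \<tau>)) has_real_derivative (- 1)) (at x)"
      by (auto intro!: derivative_eq_intros)
    have "(A has_real_derivative (1 + T - x) powr e) (at x)"
    proof (cases "e = -1")
      case True
      have "((\<lambda>\<tau>. ln (1 + (T - \<tau>))) has_real_derivative (1 / (1 + (T - x))) * (- 1)) (at x)"
        using DERIV_ln_divide[OF pos] inner by (rule DERIV_chain2)
      then have "(A has_real_derivative (1 / (1 + (T - x)))) (at x)"
        unfolding A_def shifted_powr_primitive_def using True by (auto dest: DERIV_minus)
      moreover have "(1 + T - x) powr e = 1 / (1 + (T - x))"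
        using True pos by (simp add: powr_minus_divide add.assoc)
      ultimately show ?thesis by simp
    next
      case False
      from DERIV_fun_powr[OF inner pos, of "e + 1"]
      have "((\<lambda>\<tau>. (1 + (T - \<tau>)) powr (e + 1)) has_real_derivative
              (e + 1) * (1 + (T - x)) powr e * (- 1)) (at x)"
        by simp
      then have "((\<lambda>\<tau>. - ((1 + (T - \<tau>)) powr (e + 1) / (e + 1))) has_real_derivative
                   - ((e + 1) * (1 + (T - x)) powr e * (- 1) / (e + 1))) (at x)"
        by (intro DERIV_minus DERIV_cdivide)
      moreover have "- ((e + 1) * (1 + (T - x)) powr e * (- 1) / (e + 1)) = (1 + T - x) powr e"
        using False by (simp add: add_diff_eq)
      ultimately show ?thesis
        unfolding A_def shifted_powr_primitive_def using False by (simp add: add.assoc)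
    qed
    then show "(A has_vector_derivative (1 + T - x) powr e) (at x)"
      by (simp add: has_real_derivative_iff_has_vector_derivative)
  qed (use assms in simp)
  then show ?thesis by (simp add: A_def)
qed

lemma shifted_powr_primitive_strict_mono:
  assumes "0 \<le> a" "a < b"
  shows "shifted_powr_primitive e a < shifted_powr_primitive e b"
proof (cases "e = -1")
  case True
  then show ?thesis using assms by (simp add: shifted_powr_primitive_def)
next
  case False
  then consider "0 < e + 1" | "e + 1 < 0" by linarith
  then show ?thesis
  proof cases
    case 1
    then have "(1 + a) powr (e + 1) < (1 + b) powr (e + 1)"
      using assms by (intro powr_less_mono2) auto
    with 1 False show ?thesis
      by (simp add: shifted_powr_primitive_def divide_strict_right_mono)
  next
    case 2
    then have "(1 + b) powr (e + 1) < (1 + a) powr (e + 1)"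
      using assms by (intro powr_less_mono2_neg) auto
    with 2 False show ?thesis
      by (simp add: shifted_powr_primitive_def divide_strict_right_mono_neg)
  qed
qed

lemma shifted_powr_primitive_diff_le_neg:
  assumes "e + 1 < 0" "0 \<le> X"
  shows "shifted_powr_primitive e X - shifted_powr_primitive e 0 \<le> 1 / (- (e + 1))"
proof -
  have "e \<noteq> -1" using assms by auto
  then have "shifted_powr_primitive e X - shifted_powr_primitive e 0
               = ((1 + X) powr (e + 1) - 1) / (e + 1)"
    by (simp add: shifted_powr_primitive_def diff_divide_distrib)
  also have "\<dots> = (1 - (1 + X) powr (e + 1)) / (- (e + 1))"
    using assms by (simp add: field_simps)
  also have "\<dots> \<le> 1 / (- (e + 1))"
    using assms by (intro divide_right_mono) auto
  finally show ?thesis .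
qed

lemma shifted_powr_primitive_diff_le_pos:
  assumes "0 < e + 1" "1 \<le> X"
  shows "shifted_powr_primitive e X - shifted_powr_primitive e 0
           \<le> 2 powr (e + 1) * X powr (e + 1) / (e + 1)"
proof -
  have "e \<noteq> -1" using assms by auto
  then have "shifted_powr_primitive e X - shifted_powr_primitive e 0
               = ((1 + X) powr (e + 1) - 1) / (e + 1)"
    by (simp add: shifted_powr_primitive_def diff_divide_distrib)
  also have "\<dots> \<le> (1 + X) powr (e + 1) / (e + 1)"
    using assms by (simp add: divide_right_mono)
  also have "\<dots> \<le> (2 * X) powr (e + 1) / (e + 1)"
    using assms by (intro divide_right_mono powr_mono2) auto
  also have "\<dots> = 2 powr (e + 1) * X powr (e + 1) / (e + 1)"
    by (simp add: powr_mult)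
  finally show ?thesis .
qed

lemma ln_one_plus_mult_ge:
  fixes b T :: real
  assumes "0 < b" "1 \<le> T"
  shows "b / (1 + b) * ln T \<le> ln (1 + b * T) - ln (1 + b)"
proof -
  define k where "k = b / (1 + b)"
  have k: "0 \<le> k" "k \<le> 1" using assms by (auto simp: k_def)
  have "(1 - k) * ln 1 + k * ln T \<le> ln ((1 - k) *\<^sub>R 1 + k *\<^sub>R T)"
    by (rule concave_onD[OF ln_concave]) (use k assms in auto)
  moreover have "(1 - k) *\<^sub>R 1 + k *\<^sub>R T = (1 + b * T) / (1 + b)"
    using assms by (simp add: k_def field_simps)
  moreover have "0 < 1 + b * T" using assms by (intro add_pos_nonneg) auto
  ultimately show ?thesis using assms by (simp add: k_def ln_div)
qed

lemma lrs_K_bounds: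
  assumes "0 \<le> u" "1 < \<beta>"
  shows "0 \<le> lrs_K \<beta> u \<and> lrs_K \<beta> u \<le> 1"
proof -
  have "(1 + u) powr (-(2 - 1 / \<beta>)) \<le> (1 + u) powr 0"
    using assms by (intro powr_mono) (auto simp: field_simps)
  then show ?thesis using assms by (simp add: lrs_K_def)
qed

lemma one_plus_powr_add_comparable:
  fixes T s I X cI CI :: real
  assumes T: "2 \<le> T" and s: "0 < s" and X: "0 \<le> X"
    and lower: "cI * X \<le> I" and upper: "I \<le> CI * X"
  shows "min ((3/2) powr (-s)) cI * (T powr (-s) + X) \<le> (1 + T) powr (-s) + I"
    and "(1 + T) powr (-s) + I \<le> max 1 CI * (T powr (-s) + X)"
proof -
  have "(3/2) powr (-s) * T powr (-s) = (3/2 * T) powr (-s)"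
    by (rule powr_mult[symmetric])
  also have "\<dots> \<le> (1 + T) powr (-s)"
    using T s by (intro powr_mono2') auto
  finally have "(3/2) powr (-s) * T powr (-s) \<le> (1 + T) powr (-s)" .
  moreover have "min ((3/2) powr (-s)) cI * T powr (-s) \<le> (3/2) powr (-s) * T powr (-s)"
    by (intro mult_right_mono) auto
  moreover have "min ((3/2) powr (-s)) cI * X \<le> cI * X"
    using X by (intro mult_right_mono) auto
  ultimately show "min ((3/2) powr (-s)) cI * (T powr (-s) + X) \<le> (1 + T) powr (-s) + I"
    using lower by (simp add: distrib_left)
  have "(1 + T) powr (-s) \<le> T powr (-s)"
    using T s by (intro powr_mono2') auto
  moreover have "T powr (-s) \<le> max 1 CI * T powr (-s)"
    using mult_right_mono[of 1 "max 1 CI" "T powr (-s)"] by simp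
  moreover have "CI * X \<le> max 1 CI * X"
    using X by (intro mult_right_mono) auto
  ultimately show "(1 + T) powr (-s) + I \<le> max 1 CI * (T powr (-s) + X)"
    using upper by (simp add: distrib_left)
qed

locale power_tail_profile =
  fixes \<zeta> :: "real \<Rightarrow> real" and \<gamma> \<delta> c1 c2 :: real
  assumes profile: "lrs_profile \<zeta>"
    and gamma_pos: "0 < \<gamma>" and delta_pos: "0 < \<delta>" and delta_less_1: "\<delta> < 1"
    and c1_pos: "0 < c1" and c2_pos: "0 < c2"
    and tail: "\<And>x. x \<in> {\<delta>..1} \<Longrightarrow> c1 * (1 - x) powr \<gamma> \<le> \<zeta> x \<and> \<zeta> x \<le> c2 * (1 - x) powr \<gamma>"
begin

lemma profile_measurable: "(\<lambda>x. indicator {0..1} x * \<zeta> x) \<in> borel_measurable borel"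
  using profile unfolding lrs_profile_def set_borel_measurable_def by simp

lemma profile_bounds: "x \<in> {0..1} \<Longrightarrow> 0 \<le> \<zeta> x \<and> \<zeta> x \<le> 1"
  using profile unfolding lrs_profile_def by auto

definition tail_exp :: real where
  "tail_exp = \<gamma> / (\<gamma> + 1)"

definition tail_mass :: real where
  "tail_mass = c1 * (1 - \<delta>) powr (\<gamma> + 1) / (\<gamma> + 1)"

(* On the last window * T_N of intrinsic time, z(tau) lies in the tail [delta N, N] because
   window < tail_mass; window <= 1/4 keeps 1 + window * T_N <= T_N once T_N >= 2. *)
definition window :: real where
  "window = min (tail_mass / 2) (1 / 4)"

definition phi_upper_const :: real where
  "phi_upper_const = max (c2 * ((\<gamma> + 1) / c1) powr tail_exp) (tail_mass powr (- tail_exp))"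

definition phi_lower_const :: real where
  "phi_lower_const = c1 * ((\<gamma> + 1) * tail_mass / c2) powr tail_exp"

definition integrand_lower_const :: real where
  "integrand_lower_const = phi_lower_const * (window / (1 + window)) powr tail_exp"

definition kernel_exp :: "real \<Rightarrow> real" where
  "kernel_exp \<beta> = tail_exp - (2 - 1 / \<beta>)"

lemma tail_exp_bounds: "0 < tail_exp" "tail_exp < 1"
  using gamma_pos by (auto simp: tail_exp_def)

lemma powr_powr_tail_exp: "0 \<le> x \<Longrightarrow> (x powr (\<gamma> + 1)) powr tail_exp = x powr \<gamma>"
  using gamma_pos by (simp add: powr_powr tail_exp_def)

lemma tail_mass_pos: "0 < tail_mass"
  using c1_pos delta_less_1 gamma_pos by (simp add: tail_mass_def)

lemma window_bounds: "0 < window" "window \<le> 1 / 4" "window < tail_mass"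
  using tail_mass_pos by (auto simp: window_def)

lemma phi_upper_const_pos: "0 < phi_upper_const"
  using c1_pos c2_pos gamma_pos by (simp add: phi_upper_const_def less_max_iff_disj)

lemma integrand_lower_const_pos: "0 < integrand_lower_const"
  using c1_pos c2_pos tail_mass_pos gamma_pos window_bounds
  by (simp add: integrand_lower_const_def phi_lower_const_def)

lemma kernel_exp_plus_one: "kernel_exp \<beta> + 1 = 1 / \<beta> - 1 / (\<gamma> + 1)"
  using gamma_pos by (simp add: kernel_exp_def tail_exp_def field_simps)

lemma kernel_exp_neg:
  assumes "1 < \<beta>"
  shows "kernel_exp \<beta> < 0"
proof -
  have "1 / \<beta> < 1" using assms by simp
  then show ?thesis using tail_exp_bounds by (simp add: kernel_exp_def)
qed

lemma kernel_exp_plus_one_sgn: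
  assumes "1 < \<beta>"
  shows "kernel_exp \<beta> + 1 < 0 \<longleftrightarrow> \<gamma> + 1 < \<beta>"
    and "kernel_exp \<beta> + 1 = 0 \<longleftrightarrow> \<beta> = \<gamma> + 1"
    and "0 < kernel_exp \<beta> + 1 \<longleftrightarrow> \<beta> < \<gamma> + 1"
proof -
  have denom: "0 < \<beta> * (\<gamma> + 1)" using assms gamma_pos by simp
  have "kernel_exp \<beta> + 1 = (\<gamma> + 1 - \<beta>) / (\<beta> * (\<gamma> + 1))"
    unfolding kernel_exp_plus_one using assms gamma_pos by (simp add: diff_frac_eq)
  then show "kernel_exp \<beta> + 1 < 0 \<longleftrightarrow> \<gamma> + 1 < \<beta>"
    and "kernel_exp \<beta> + 1 = 0 \<longleftrightarrow> \<beta> = \<gamma> + 1"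
    and "0 < kernel_exp \<beta> + 1 \<longleftrightarrow> \<beta> < \<gamma> + 1"
    using denom by (auto simp: divide_less_0_iff zero_less_divide_iff)
qed

definition kernel_lower_const :: "real \<Rightarrow> real" where
  "kernel_lower_const \<beta> = integrand_lower_const *
     (if \<gamma> + 1 < \<beta> then shifted_powr_primitive (kernel_exp \<beta>) (2 * window)
                          - shifted_powr_primitive (kernel_exp \<beta>) window
      else if \<beta> = \<gamma> + 1 then window / (1 + window)
      else window / 2)"

definition kernel_upper_const :: "real \<Rightarrow> real" where
  "kernel_upper_const \<beta> = phi_upper_const *
     (if \<gamma> + 1 < \<beta> then 1 / (- (kernel_exp \<beta> + 1))
      else if \<beta> = \<gamma> + 1 then 2
      else 2 powr (kernel_exp \<beta> + 1) / (kernel_exp \<beta> + 1))"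

lemma kernel_lower_const_pos: "0 < kernel_lower_const \<beta>"
  using integrand_lower_const_pos window_bounds shifted_powr_primitive_strict_mono[of window "2 * window"]
  by (simp add: kernel_lower_const_def)

end

section \<open>Intrinsic time\<close>

locale power_tail_schedule = power_tail_profile +
  fixes \<eta>0 :: real and N :: nat
  assumes eta0_pos: "0 < \<eta>0" and N_pos: "0 < N"
begin

abbreviation "eta \<equiv> lrs_eta \<eta>0 \<zeta> N"
abbreviation "itime \<equiv> lrs_time \<eta>0 \<zeta> N"
abbreviation "TN \<equiv> lrs_T \<eta>0 \<zeta> N"
abbreviation "zinv \<equiv> lrs_zinv \<eta>0 \<zeta> N"
abbreviation "phi \<equiv> lrs_phi \<eta>0 \<zeta> N"

lemma real_N_pos: "0 < real N"
  using N_pos by simp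

lemma eta_bounds: "u \<in> {0..real N} \<Longrightarrow> 0 \<le> eta u \<and> eta u \<le> \<eta>0"
proof -
  assume "u \<in> {0..real N}"
  then have "u / real N \<in> {0..1}" using real_N_pos by (auto simp: field_simps)
  from profile_bounds[OF this] eta0_pos show ?thesis
    by (simp add: lrs_eta_def mult_left_le)
qed

lemma eta_measurable:
  assumes "0 \<le> a" "b \<le> real N"
  shows "(\<lambda>u. indicator {a..b} u * eta u) \<in> borel_measurable borel"
proof -
  have "(\<lambda>u. indicator {a..b} u * eta u) =
          (\<lambda>u. indicator {a..b} u * (\<eta>0 * (indicator {0..1} (u / real N) * \<zeta> (u / real N))))"
    using assms real_N_pos by (auto simp: fun_eq_iff indicator_def lrs_eta_def field_simps)
  also have "\<dots> \<in> borel_measurable borel"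
    using measurable_compose[OF _ profile_measurable, of "\<lambda>u. u / real N"] by measurable
  finally show ?thesis .
qed

lemma eta_set_integrable:
  "0 \<le> a \<Longrightarrow> b \<le> real N \<Longrightarrow> set_integrable lborel {a..b} eta"
  by (rule set_integrable_Icc_bounded[OF eta_measurable, where B=\<eta>0]) (use eta_bounds in auto)

lemma eta_integrable_on: "0 \<le> a \<Longrightarrow> b \<le> real N \<Longrightarrow> eta integrable_on {a..b}"
  using set_borel_integral_eq_integral(1)[OF eta_set_integrable] .

lemma itime_eq_integral: "0 \<le> z \<Longrightarrow> z \<le> real N \<Longrightarrow> itime z = integral {0..z} eta"
  unfolding lrs_time_def using set_borel_integral_eq_integral(2)[OF eta_set_integrable] by simp

lemma itime_diff:
  assumes "0 \<le> z1" "z1 \<le> z2" "z2 \<le> real N"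
  shows "itime z2 - itime z1 = integral {z1..z2} eta"
  using Henstock_Kurzweil_Integration.integral_combine[OF _ _ eta_integrable_on[of 0 z2], of z1]
    assms itime_eq_integral by auto

lemma integral_eta_bounds:
  assumes "0 \<le> z1" "z1 \<le> z2" "z2 \<le> real N"
  shows "0 \<le> integral {z1..z2} eta \<and> integral {z1..z2} eta \<le> \<eta>0 * (z2 - z1)"
proof
  show "0 \<le> integral {z1..z2} eta"
    using assms eta_bounds by (intro integral_nonneg eta_integrable_on) auto
  have "integral {z1..z2} eta \<le> integral {z1..z2} (\<lambda>_. \<eta>0)"
    using assms eta_bounds by (intro integral_le eta_integrable_on) auto
  then show "integral {z1..z2} eta \<le> \<eta>0 * (z2 - z1)"
    using assms by (simp add: mult.commute)
qed

lemma itime_zero: "itime 0 = 0"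
  using itime_eq_integral[of 0] by simp

lemma itime_mono: "0 \<le> z1 \<Longrightarrow> z1 \<le> z2 \<Longrightarrow> z2 \<le> real N \<Longrightarrow> itime z1 \<le> itime z2"
  using itime_diff integral_eta_bounds by fastforce

lemma itime_continuous: "continuous_on {0..real N} itime"
proof -
  have "continuous_on {0..real N} (\<lambda>z. integral {0..z} eta)"
    by (rule indefinite_integral_continuous_1[OF eta_integrable_on]) auto
  then show ?thesis
    by (rule continuous_on_eq) (simp add: itime_eq_integral)
qed

lemma TN_eq_integral: "TN = integral {0..real N} eta"
  using itime_eq_integral[of "real N"] by (simp add: lrs_T_def)

lemma zinv_inverse:
  assumes "\<tau> \<in> {0..TN}"
  shows "zinv \<tau> \<in> {0..real N} \<and> itime (zinv \<tau>) = \<tau>"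
  using continuous_on_superlevel_Inf[OF itime_continuous, of \<tau>] assms itime_zero
  by (simp add: lrs_zinv_def lrs_T_def)

lemma zinv_mono: "0 \<le> \<tau>1 \<Longrightarrow> \<tau>1 \<le> \<tau>2 \<Longrightarrow> \<tau>2 \<le> TN \<Longrightarrow> zinv \<tau>1 \<le> zinv \<tau>2"
  unfolding lrs_zinv_def by (rule superlevel_Inf_mono) (auto simp: lrs_T_def)

lemma remaining_time_eq:
  "\<tau> \<in> {0..TN} \<Longrightarrow> TN - \<tau> = integral {zinv \<tau>..real N} eta"
  using zinv_inverse[of \<tau>] itime_diff[of "zinv \<tau>" "real N"] by (auto simp: lrs_T_def)

lemma delta_N_bounds: "0 \<le> \<delta> * real N" "\<delta> * real N \<le> real N"
  using delta_pos delta_less_1 real_N_pos by auto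

lemma integral_eta_tail_bounds:
  assumes "\<delta> * real N \<le> z" "z \<le> real N"
  shows "\<eta>0 * c1 * real N * (1 - z / real N) powr (\<gamma> + 1) / (\<gamma> + 1) \<le> integral {z..real N} eta"
    and "integral {z..real N} eta \<le> \<eta>0 * c2 * real N * (1 - z / real N) powr (\<gamma> + 1) / (\<gamma> + 1)"
proof -
  have z0: "0 \<le> z" using assms delta_N_bounds by linarith
  have I: "((\<lambda>u. c * (1 - u / real N) powr \<gamma>) has_integral
             c * (real N * (1 - z / real N) powr (\<gamma> + 1) / (\<gamma> + 1))) {z..real N}" for c
    using has_integral_one_minus_div_powr[OF real_N_pos _ z0 assms(2), of \<gamma>] gamma_pos
    by (intro has_integral_mult_right) auto
  have eta_I: "(eta has_integral integral {z..real N} eta) {z..real N}"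
    using z0 by (intro integrable_integral eta_integrable_on) auto
  have tail_at: "u / real N \<in> {\<delta>..1}" if "u \<in> {z..real N}" for u
    using that assms real_N_pos by (auto simp: field_simps)
  have "\<eta>0 * c1 * (real N * (1 - z / real N) powr (\<gamma> + 1) / (\<gamma> + 1)) \<le> integral {z..real N} eta"
    by (rule has_integral_le[OF I eta_I])
       (use tail[OF tail_at] eta0_pos in \<open>simp add: lrs_eta_def mult.assoc\<close>)
  then show "\<eta>0 * c1 * real N * (1 - z / real N) powr (\<gamma> + 1) / (\<gamma> + 1) \<le> integral {z..real N} eta"
    by (simp add: mult.assoc)
  have "integral {z..real N} eta \<le> \<eta>0 * c2 * (real N * (1 - z / real N) powr (\<gamma> + 1) / (\<gamma> + 1))"
    by (rule has_integral_le[OF eta_I I])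
       (use tail[OF tail_at] eta0_pos in \<open>simp add: lrs_eta_def mult.assoc\<close>)
  then show "integral {z..real N} eta \<le> \<eta>0 * c2 * real N * (1 - z / real N) powr (\<gamma> + 1) / (\<gamma> + 1)"
    by (simp add: mult.assoc)
qed

lemma integral_eta_from_delta: "\<eta>0 * real N * tail_mass \<le> integral {\<delta> * real N..real N} eta"
  using integral_eta_tail_bounds(1)[OF order_refl delta_N_bounds(2)] real_N_pos
  by (simp add: tail_mass_def field_simps)

lemma TN_le: "TN \<le> \<eta>0 * real N"
  using TN_eq_integral integral_eta_bounds[of 0 "real N"] real_N_pos by simp

lemma TN_ge: "\<eta>0 * real N * tail_mass \<le> TN"
proof -
  have "TN - itime (\<delta> * real N) = integral {\<delta> * real N..real N} eta"
    using itime_diff[OF delta_N_bounds order_refl] by (simp add: lrs_T_def)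
  moreover have "0 \<le> itime (\<delta> * real N)"
    using itime_mono[OF order_refl delta_N_bounds] itime_zero by simp
  ultimately show ?thesis using integral_eta_from_delta by simp
qed

lemma TN_pos: "0 < TN"
  using TN_ge tail_mass_pos eta0_pos real_N_pos by (meson less_le_trans mult_pos_pos)

section \<open>The learning rate in intrinsic time\<close>

lemma phi_eq: "phi \<tau> = \<eta>0 * \<zeta> (zinv \<tau> / real N)"
  by (simp add: lrs_phi_def lrs_eta_def)

lemma phi_bounds: "\<tau> \<in> {0..TN} \<Longrightarrow> 0 \<le> phi \<tau> \<and> phi \<tau> \<le> \<eta>0"
  using eta_bounds zinv_inverse by (simp add: lrs_phi_def)

lemma remaining_time_ge_before_tail:
  assumes \<tau>: "\<tau> \<in> {0..TN}" and before: "zinv \<tau> < \<delta> * real N"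
  shows "TN * tail_mass \<le> TN - \<tau>"
proof -
  have z: "zinv \<tau> \<in> {0..real N}" "itime (zinv \<tau>) = \<tau>" using zinv_inverse[OF \<tau>] by auto
  then have "\<tau> \<le> itime (\<delta> * real N)"
    using itime_mono[of "zinv \<tau>" "\<delta> * real N"] before delta_N_bounds by auto
  moreover have "TN - itime (\<delta> * real N) = integral {\<delta> * real N..real N} eta"
    using itime_diff[OF delta_N_bounds order_refl] by (simp add: lrs_T_def)
  moreover have "TN * tail_mass \<le> \<eta>0 * real N * tail_mass"
    using TN_le tail_mass_pos by simp
  ultimately show ?thesis using integral_eta_from_delta by linarith
qed

lemma remaining_fraction_tail_bounds:
  assumes \<tau>: "\<tau> \<in> {0..TN}" and in_tail: "\<delta> * real N \<le> zinv \<tau>"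
  shows "c1 / (\<gamma> + 1) * (1 - zinv \<tau> / real N) powr (\<gamma> + 1) \<le> (TN - \<tau>) / TN"
    and "(TN - \<tau>) / TN \<le> c2 / ((\<gamma> + 1) * tail_mass) * (1 - zinv \<tau> / real N) powr (\<gamma> + 1)"
proof -
  define p where "p = (1 - zinv \<tau> / real N) powr (\<gamma> + 1) / (\<gamma> + 1)"
  have p: "0 \<le> p" using gamma_pos by (simp add: p_def)
  have w: "TN - \<tau> = integral {zinv \<tau>..real N} eta" using remaining_time_eq[OF \<tau>] .
  note tail_bounds = integral_eta_tail_bounds[OF in_tail, folded w]
  have "TN * (c1 * p) \<le> \<eta>0 * real N * (c1 * p)"
    using TN_le p c1_pos by (intro mult_right_mono) auto
  also have "\<dots> \<le> TN - \<tau>"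
    using tail_bounds(1) zinv_inverse[OF \<tau>] by (simp add: p_def mult_ac)
  finally show "c1 / (\<gamma> + 1) * (1 - zinv \<tau> / real N) powr (\<gamma> + 1) \<le> (TN - \<tau>) / TN"
    using TN_pos by (simp add: p_def field_simps)
  have "TN - \<tau> \<le> \<eta>0 * real N * (c2 * p)"
    using tail_bounds(2) zinv_inverse[OF \<tau>] by (simp add: p_def mult_ac)
  also have "\<dots> \<le> TN / tail_mass * (c2 * p)"
    using TN_ge tail_mass_pos p c2_pos by (intro mult_right_mono) (auto simp: field_simps)
  finally show "(TN - \<tau>) / TN \<le> c2 / ((\<gamma> + 1) * tail_mass) * (1 - zinv \<tau> / real N) powr (\<gamma> + 1)"
    using TN_pos tail_mass_pos by (simp add: p_def field_simps)
qed

lemma phi_le: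
  assumes \<tau>: "\<tau> \<in> {0..TN}"
  shows "phi \<tau> \<le> phi_upper_const * \<eta>0 * ((TN - \<tau>) / TN) powr tail_exp"
proof (cases "zinv \<tau> < \<delta> * real N")
  case True
  have "tail_mass \<le> (TN - \<tau>) / TN"
    using remaining_time_ge_before_tail[OF \<tau> True] TN_pos by (simp add: field_simps)
  then have "tail_mass powr tail_exp \<le> ((TN - \<tau>) / TN) powr tail_exp"
    using tail_mass_pos tail_exp_bounds by (intro powr_mono2) auto
  then have "1 \<le> tail_mass powr (- tail_exp) * ((TN - \<tau>) / TN) powr tail_exp"
    using tail_mass_pos by (simp add: powr_minus field_simps)
  also have "\<dots> \<le> phi_upper_const * ((TN - \<tau>) / TN) powr tail_exp"
    by (intro mult_right_mono) (auto simp: phi_upper_const_def)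
  finally have "\<eta>0 * 1 \<le> \<eta>0 * (phi_upper_const * ((TN - \<tau>) / TN) powr tail_exp)"
    using eta0_pos by (intro mult_left_mono) auto
  then show ?thesis using phi_bounds[OF \<tau>] by (simp add: mult_ac)
next
  case False
  define x where "x = zinv \<tau> / real N"
  have x: "x \<in> {\<delta>..1}"
    using False zinv_inverse[OF \<tau>] real_N_pos by (auto simp: x_def field_simps)
  have "(1 - x) powr (\<gamma> + 1) = (\<gamma> + 1) / c1 * (c1 / (\<gamma> + 1) * (1 - x) powr (\<gamma> + 1))"
    using c1_pos gamma_pos by simp
  also have "\<dots> \<le> (\<gamma> + 1) / c1 * ((TN - \<tau>) / TN)"
    using remaining_fraction_tail_bounds(1)[OF \<tau>] False c1_pos gamma_pos
    by (intro mult_left_mono) (auto simp: x_def)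
  finally have base: "(1 - x) powr (\<gamma> + 1) \<le> (\<gamma> + 1) / c1 * ((TN - \<tau>) / TN)" .
  have "(1 - x) powr \<gamma> = ((1 - x) powr (\<gamma> + 1)) powr tail_exp"
    using x by (simp add: powr_powr_tail_exp)
  also have "\<dots> \<le> ((\<gamma> + 1) / c1 * ((TN - \<tau>) / TN)) powr tail_exp"
    using base tail_exp_bounds by (intro powr_mono2) auto
  also have "\<dots> = ((\<gamma> + 1) / c1) powr tail_exp * ((TN - \<tau>) / TN) powr tail_exp"
    by (rule powr_mult)
  finally have "c2 * (1 - x) powr \<gamma>
                  \<le> c2 * (((\<gamma> + 1) / c1) powr tail_exp * ((TN - \<tau>) / TN) powr tail_exp)"
    using c2_pos by (intro mult_left_mono) auto
  then have "\<zeta> x \<le> c2 * ((\<gamma> + 1) / c1) powr tail_exp * ((TN - \<tau>) / TN) powr tail_exp"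
    using tail[OF x] by (simp add: mult.assoc)
  also have "\<dots> \<le> phi_upper_const * ((TN - \<tau>) / TN) powr tail_exp"
    by (intro mult_right_mono) (auto simp: phi_upper_const_def)
  finally show ?thesis
    using eta0_pos by (simp add: phi_eq x_def mult_ac)
qed

lemma phi_ge:
  assumes \<tau>: "\<tau> \<in> {TN - window * TN..TN}"
  shows "phi_lower_const * \<eta>0 * ((TN - \<tau>) / TN) powr tail_exp \<le> phi \<tau>"
proof -
  have "window * TN \<le> TN" using window_bounds TN_pos by simp
  then have \<tau>0: "\<tau> \<in> {0..TN}" using \<tau> by auto
  have in_tail: "\<delta> * real N \<le> zinv \<tau>"
  proof (rule ccontr)
    assume "\<not> \<delta> * real N \<le> zinv \<tau>"
    then have "TN * tail_mass \<le> TN - \<tau>" using remaining_time_ge_before_tail[OF \<tau>0] by simp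
    moreover have "window * TN < tail_mass * TN" using window_bounds TN_pos by simp
    ultimately show False using \<tau> by (simp add: mult.commute)
  qed
  define x where "x = zinv \<tau> / real N"
  have x: "x \<in> {\<delta>..1}"
    using in_tail zinv_inverse[OF \<tau>0] real_N_pos by (auto simp: x_def field_simps)
  have frac: "0 \<le> (TN - \<tau>) / TN" using \<tau>0 TN_pos by simp
  have "(\<gamma> + 1) * tail_mass / c2 * ((TN - \<tau>) / TN)
          \<le> (\<gamma> + 1) * tail_mass / c2 * (c2 / ((\<gamma> + 1) * tail_mass) * (1 - x) powr (\<gamma> + 1))"
    using remaining_fraction_tail_bounds(2)[OF \<tau>0 in_tail] c2_pos gamma_pos tail_mass_pos
    by (intro mult_left_mono) (auto simp: x_def)
  also have "\<dots> = (1 - x) powr (\<gamma> + 1)"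
    using c2_pos gamma_pos tail_mass_pos by simp
  finally have base: "(\<gamma> + 1) * tail_mass / c2 * ((TN - \<tau>) / TN) \<le> (1 - x) powr (\<gamma> + 1)" .
  have "phi_lower_const * ((TN - \<tau>) / TN) powr tail_exp
          = c1 * (((\<gamma> + 1) * tail_mass / c2) powr tail_exp * ((TN - \<tau>) / TN) powr tail_exp)"
    by (simp add: phi_lower_const_def)
  also have "\<dots> = c1 * ((\<gamma> + 1) * tail_mass / c2 * ((TN - \<tau>) / TN)) powr tail_exp"
    by (simp only: powr_mult)
  also have "\<dots> \<le> c1 * ((1 - x) powr (\<gamma> + 1)) powr tail_exp"
    using base \<tau>0 TN_pos c1_pos c2_pos gamma_pos tail_mass_pos tail_exp_bounds
    by (intro mult_left_mono powr_mono2 mult_nonneg_nonneg divide_nonneg_pos) auto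
  also have "\<dots> = c1 * (1 - x) powr \<gamma>"
    using x by (simp add: powr_powr_tail_exp)
  also have "\<dots> \<le> \<zeta> x" using tail[OF x] by simp
  finally show ?thesis using eta0_pos by (simp add: phi_eq x_def mult_ac)
qed

lemma phi_measurable: "(\<lambda>\<tau>. indicator {0..TN} \<tau> * phi \<tau>) \<in> borel_measurable borel"
proof -
  \<comment> \<open>clamping the argument makes the generalized inverse monotone on all of the real line\<close>
  define zc where "zc \<tau> = zinv (max 0 (min \<tau> TN))" for \<tau>
  have "mono zc"
    unfolding zc_def mono_def using TN_pos by (intro allI impI zinv_mono) auto
  then have zc: "zc \<in> borel_measurable borel" by (rule borel_measurable_mono)
  have "(\<lambda>\<tau>. indicator {0..TN} \<tau> * phi \<tau>) = (\<lambda>\<tau>.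
          indicator {0..TN} \<tau> * (\<eta>0 * (indicator {0..1} (zc \<tau> / real N) * \<zeta> (zc \<tau> / real N))))"
  proof
    fix \<tau>
    show "indicator {0..TN} \<tau> * phi \<tau> =
            indicator {0..TN} \<tau> * (\<eta>0 * (indicator {0..1} (zc \<tau> / real N) * \<zeta> (zc \<tau> / real N)))"
      using zinv_inverse[of \<tau>] real_N_pos
      by (cases "\<tau> \<in> {0..TN}") (auto simp: zc_def phi_eq indicator_def field_simps)
  qed
  moreover have "(\<lambda>\<tau>. indicator {0..TN} \<tau> *
          (\<eta>0 * (indicator {0..1} (zc \<tau> / real N) * \<zeta> (zc \<tau> / real N)))) \<in> borel_measurable borel"
    using measurable_compose[OF _ profile_measurable, of "\<lambda>\<tau>. zc \<tau> / real N"] zc by measurable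
  ultimately show ?thesis by simp
qed

section \<open>The kernel integral\<close>

abbreviation "kernel_integrand \<beta> \<tau> \<equiv> lrs_K \<beta> (TN - \<tau>) * phi \<tau>"

lemma kernel_integrand_bounds:
  assumes "1 < \<beta>" "\<tau> \<in> {0..TN}"
  shows "0 \<le> kernel_integrand \<beta> \<tau> \<and> kernel_integrand \<beta> \<tau> \<le> \<eta>0"
  using lrs_K_bounds[of "TN - \<tau>" \<beta>] phi_bounds[of \<tau>] assms mult_mono[of _ 1 _ \<eta>0] by auto

lemma kernel_integrand_set_integrable:
  assumes "1 < \<beta>"
  shows "set_integrable lborel {0..TN} (kernel_integrand \<beta>)"
proof (rule set_integrable_Icc_bounded[where B=\<eta>0])
  have "(\<lambda>\<tau>. indicator {0..TN} \<tau> * kernel_integrand \<beta> \<tau>) =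
          (\<lambda>\<tau>. lrs_K \<beta> (TN - \<tau>) * (indicator {0..TN} \<tau> * phi \<tau>))"
    by (simp add: fun_eq_iff mult_ac)
  also have "\<dots> \<in> borel_measurable borel"
    unfolding lrs_K_def using phi_measurable by measurable
  finally show "(\<lambda>\<tau>. indicator {0..TN} \<tau> * kernel_integrand \<beta> \<tau>) \<in> borel_measurable borel" .
qed (use kernel_integrand_bounds[OF assms] in auto)

lemma kernel_integrand_integrable_on: "1 < \<beta> \<Longrightarrow> kernel_integrand \<beta> integrable_on {0..TN}"
  using set_borel_integral_eq_integral(1)[OF kernel_integrand_set_integrable] .

lemma lrs_F_eq:
  "1 < \<beta> \<Longrightarrow> lrs_F s \<beta> \<eta>0 \<zeta> N = (1 + TN) powr (-s) + integral {0..TN} (kernel_integrand \<beta>)"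
  unfolding lrs_F_def Let_def
  using set_borel_integral_eq_integral(2)[OF kernel_integrand_set_integrable] by simp

lemma kernel_times_powr_tail_exp:
  "lrs_K \<beta> w * (1 + w) powr tail_exp = (1 + w) powr kernel_exp \<beta>"
  unfolding lrs_K_def kernel_exp_def powr_add[symmetric]
  by (rule arg_cong[where f="(powr) (1 + w)"]) simp

lemma fraction_powr_tail_exp: "0 \<le> w \<Longrightarrow> (w / TN) powr tail_exp = TN powr (- tail_exp) * w powr tail_exp"
  using TN_pos by (simp only: powr_divide powr_minus) (simp add: field_simps)

lemma kernel_integrand_le:
  assumes \<beta>: "1 < \<beta>" and \<tau>: "\<tau> \<in> {0..TN}"
  shows "kernel_integrand \<beta> \<tau>
           \<le> phi_upper_const * \<eta>0 * TN powr (- tail_exp) * (1 + TN - \<tau>) powr kernel_exp \<beta>"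
proof -
  have K: "0 \<le> lrs_K \<beta> (TN - \<tau>)" using lrs_K_bounds[OF _ \<beta>] \<tau> by simp
  have w: "0 \<le> TN - \<tau>" using \<tau> by simp
  have "kernel_integrand \<beta> \<tau> \<le> lrs_K \<beta> (TN - \<tau>) * (phi_upper_const * \<eta>0 * ((TN - \<tau>) / TN) powr tail_exp)"
    using phi_le[OF \<tau>] K by (intro mult_left_mono) auto
  also have "\<dots> = phi_upper_const * \<eta>0 * TN powr (- tail_exp) * (lrs_K \<beta> (TN - \<tau>) * (TN - \<tau>) powr tail_exp)"
    using fraction_powr_tail_exp[OF w] by (simp add: mult_ac)
  also have "\<dots> \<le> phi_upper_const * \<eta>0 * TN powr (- tail_exp) * (lrs_K \<beta> (TN - \<tau>) * (1 + (TN - \<tau>)) powr tail_exp)"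
    using w K tail_exp_bounds phi_upper_const_pos eta0_pos
    by (intro mult_left_mono powr_mono2) auto
  finally show ?thesis
    using kernel_times_powr_tail_exp[of \<beta> "TN - \<tau>"] by (simp add: add_diff_eq)
qed

lemma kernel_integrand_ge:
  assumes \<beta>: "1 < \<beta>" and \<tau>: "\<tau> \<in> {TN - window * TN..TN - window}"
  shows "integrand_lower_const * \<eta>0 * TN powr (- tail_exp) * (1 + TN - \<tau>) powr kernel_exp \<beta>
           \<le> kernel_integrand \<beta> \<tau>"
proof -
  have "window * TN \<le> TN" using window_bounds TN_pos by simp
  then have \<tau>0: "\<tau> \<in> {0..TN}" and \<tau>1: "\<tau> \<in> {TN - window * TN..TN}"
    using \<tau> window_bounds by auto
  have K: "0 \<le> lrs_K \<beta> (TN - \<tau>)" using lrs_K_bounds[OF _ \<beta>] \<tau>0 by simp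
  have w: "window \<le> TN - \<tau>" using \<tau> by simp
  then have w0: "0 \<le> TN - \<tau>" using window_bounds by simp
  have "window / (1 + window) \<le> (TN - \<tau>) / (1 + (TN - \<tau>))"
    using w window_bounds by (simp add: field_simps)
  then have "(window / (1 + window)) powr tail_exp * (1 + (TN - \<tau>)) powr tail_exp
               \<le> ((TN - \<tau>) / (1 + (TN - \<tau>))) powr tail_exp * (1 + (TN - \<tau>)) powr tail_exp"
    using window_bounds tail_exp_bounds by (intro mult_right_mono powr_mono2) auto
  also have "\<dots> = (TN - \<tau>) powr tail_exp" using w0 by (simp add: powr_divide)
  finally have ratio: "(window / (1 + window)) powr tail_exp * (1 + (TN - \<tau>)) powr tail_exp
                         \<le> (TN - \<tau>) powr tail_exp" .
  have "integrand_lower_const * \<eta>0 * TN powr (- tail_exp) * (1 + TN - \<tau>) powr kernel_exp \<beta>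
          = lrs_K \<beta> (TN - \<tau>) * (phi_lower_const * \<eta>0 * TN powr (- tail_exp) *
              ((window / (1 + window)) powr tail_exp * (1 + (TN - \<tau>)) powr tail_exp))"
    using kernel_times_powr_tail_exp[of \<beta> "TN - \<tau>"]
    by (simp add: integrand_lower_const_def add_diff_eq mult_ac)
  also have "\<dots> \<le> lrs_K \<beta> (TN - \<tau>) * (phi_lower_const * \<eta>0 * TN powr (- tail_exp) * (TN - \<tau>) powr tail_exp)"
    using ratio K eta0_pos c1_pos by (intro mult_left_mono) (auto simp: phi_lower_const_def)
  also have "\<dots> = lrs_K \<beta> (TN - \<tau>) * (phi_lower_const * \<eta>0 * ((TN - \<tau>) / TN) powr tail_exp)"
    using fraction_powr_tail_exp[OF w0] by (simp add: mult_ac)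
  also have "\<dots> \<le> kernel_integrand \<beta> \<tau>"
    using phi_ge[OF \<tau>1] K by (intro mult_left_mono) auto
  finally show ?thesis .
qed

lemma kernel_integral_le:
  assumes \<beta>: "1 < \<beta>"
  shows "integral {0..TN} (kernel_integrand \<beta>) \<le> phi_upper_const * \<eta>0 * TN powr (- tail_exp) *
           (shifted_powr_primitive (kernel_exp \<beta>) TN - shifted_powr_primitive (kernel_exp \<beta>) 0)"
proof (rule has_integral_le)
  show "(kernel_integrand \<beta> has_integral integral {0..TN} (kernel_integrand \<beta>)) {0..TN}"
    using kernel_integrand_integrable_on[OF \<beta>] by (simp add: integrable_integral)
  show "((\<lambda>\<tau>. phi_upper_const * \<eta>0 * TN powr (- tail_exp) * (1 + TN - \<tau>) powr kernel_exp \<beta>)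
          has_integral phi_upper_const * \<eta>0 * TN powr (- tail_exp) *
           (shifted_powr_primitive (kernel_exp \<beta>) TN - shifted_powr_primitive (kernel_exp \<beta>) 0)) {0..TN}"
    using has_integral_shifted_powr_reflected[of 0 TN TN] TN_pos
    by (intro has_integral_mult_right) simp
qed (rule kernel_integrand_le[OF \<beta>])

lemma kernel_integral_ge_window:
  assumes \<beta>: "1 < \<beta>" and X: "window \<le> X1" "X1 \<le> X2" "X2 \<le> window * TN"
    and g: "(g has_integral j) {TN - X2..TN - X1}"
    and g_le: "\<And>\<tau>. \<tau> \<in> {TN - X2..TN - X1} \<Longrightarrow>
                 g \<tau> \<le> integrand_lower_const * \<eta>0 * TN powr (- tail_exp) * (1 + TN - \<tau>) powr kernel_exp \<beta>"
  shows "j \<le> integral {0..TN} (kernel_integrand \<beta>)"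
proof -
  have "window * TN \<le> TN" using window_bounds TN_pos by simp
  then have sub: "{TN - X2..TN - X1} \<subseteq> {0..TN}" using X window_bounds by auto
  have int: "kernel_integrand \<beta> integrable_on {TN - X2..TN - X1}"
    by (rule integrable_on_subinterval[OF kernel_integrand_integrable_on[OF \<beta>] sub])
  have "j \<le> integral {TN - X2..TN - X1} (kernel_integrand \<beta>)"
  proof (rule has_integral_le[OF g])
    show "(kernel_integrand \<beta> has_integral integral {TN - X2..TN - X1} (kernel_integrand \<beta>))
            {TN - X2..TN - X1}"
      using int by (simp add: integrable_integral)
    fix \<tau> assume \<tau>: "\<tau> \<in> {TN - X2..TN - X1}"
    then have "\<tau> \<in> {TN - window * TN..TN - window}" using X by auto
    with g_le[OF \<tau>] kernel_integrand_ge[OF \<beta>] show "g \<tau> \<le> kernel_integrand \<beta> \<tau>"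
      by (meson order_trans)
  qed
  also have "\<dots> \<le> integral {0..TN} (kernel_integrand \<beta>)"
    by (rule integral_subset_le[OF sub int kernel_integrand_integrable_on[OF \<beta>]])
       (use kernel_integrand_bounds[OF \<beta>] in auto)
  finally show ?thesis .
qed

lemma kernel_integral_ge_primitive:
  assumes \<beta>: "1 < \<beta>" and X: "window \<le> X1" "X1 \<le> X2" "X2 \<le> window * TN"
  shows "integrand_lower_const * \<eta>0 * TN powr (- tail_exp) *
           (shifted_powr_primitive (kernel_exp \<beta>) X2 - shifted_powr_primitive (kernel_exp \<beta>) X1)
         \<le> integral {0..TN} (kernel_integrand \<beta>)"
proof (rule kernel_integral_ge_window[OF \<beta> X])
  show "((\<lambda>\<tau>. integrand_lower_const * \<eta>0 * TN powr (- tail_exp) * (1 + TN - \<tau>) powr kernel_exp \<beta>)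
          has_integral integrand_lower_const * \<eta>0 * TN powr (- tail_exp) *
           (shifted_powr_primitive (kernel_exp \<beta>) X2 - shifted_powr_primitive (kernel_exp \<beta>) X1))
          {TN - X2..TN - X1}"
    using X window_bounds by (intro has_integral_mult_right has_integral_shifted_powr_reflected) auto
qed simp

lemma kernel_integral_ge_const:
  assumes \<beta>: "1 < \<beta>" and X: "window \<le> X1" "X1 \<le> X2" "X2 \<le> window * TN"
  shows "integrand_lower_const * \<eta>0 * TN powr (- tail_exp) * (1 + X2) powr kernel_exp \<beta> * (X2 - X1)
         \<le> integral {0..TN} (kernel_integrand \<beta>)"
proof (rule kernel_integral_ge_window[OF \<beta> X])
  fix \<tau> assume "\<tau> \<in> {TN - X2..TN - X1}"
  then have "(1 + X2) powr kernel_exp \<beta> \<le> (1 + TN - \<tau>) powr kernel_exp \<beta>"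
    using kernel_exp_neg[OF \<beta>] X window_bounds by (intro powr_mono2') auto
  then show "integrand_lower_const * \<eta>0 * TN powr (- tail_exp) * (1 + X2) powr kernel_exp \<beta>
               \<le> integrand_lower_const * \<eta>0 * TN powr (- tail_exp) * (1 + TN - \<tau>) powr kernel_exp \<beta>"
    using integrand_lower_const_pos eta0_pos by (intro mult_left_mono) auto
next
  show "((\<lambda>_. integrand_lower_const * \<eta>0 * TN powr (- tail_exp) * (1 + X2) powr kernel_exp \<beta>)
          has_integral integrand_lower_const * \<eta>0 * TN powr (- tail_exp) * (1 + X2) powr kernel_exp \<beta>
            * (X2 - X1)) {TN - X2..TN - X1}"
    using has_integral_const_real[of "integrand_lower_const * \<eta>0 * TN powr (- tail_exp) *
        (1 + X2) powr kernel_exp \<beta>" "TN - X2" "TN - X1"] X by (simp add: mult.commute)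
qed

lemma kernel_integral_bounds_tail_dominated:
  assumes \<beta>: "\<gamma> + 1 < \<beta>" and T2: "2 \<le> TN"
  shows "integrand_lower_const * (shifted_powr_primitive (kernel_exp \<beta>) (2 * window)
             - shifted_powr_primitive (kernel_exp \<beta>) window) * (\<eta>0 * TN powr (- tail_exp))
           \<le> integral {0..TN} (kernel_integrand \<beta>)"
    and "integral {0..TN} (kernel_integrand \<beta>)
           \<le> phi_upper_const / (- (kernel_exp \<beta> + 1)) * (\<eta>0 * TN powr (- tail_exp))"
proof -
  have \<beta>1: "1 < \<beta>" using \<beta> gamma_pos by simp
  have "2 * window \<le> window * TN" using T2 window_bounds by simp
  from kernel_integral_ge_primitive[OF \<beta>1 order_refl _ this] window_bounds
  show "integrand_lower_const * (shifted_powr_primitive (kernel_exp \<beta>) (2 * window)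
          - shifted_powr_primitive (kernel_exp \<beta>) window) * (\<eta>0 * TN powr (- tail_exp))
        \<le> integral {0..TN} (kernel_integrand \<beta>)"
    by (simp add: mult_ac)
  have neg: "kernel_exp \<beta> + 1 < 0" using kernel_exp_plus_one_sgn(1)[OF \<beta>1] \<beta> by simp
  have "integral {0..TN} (kernel_integrand \<beta>) \<le> phi_upper_const * \<eta>0 * TN powr (- tail_exp) *
          (shifted_powr_primitive (kernel_exp \<beta>) TN - shifted_powr_primitive (kernel_exp \<beta>) 0)"
    by (rule kernel_integral_le[OF \<beta>1])
  also have "\<dots> \<le> phi_upper_const * \<eta>0 * TN powr (- tail_exp) * (1 / (- (kernel_exp \<beta> + 1)))"
    using shifted_powr_primitive_diff_le_neg[OF neg] TN_pos phi_upper_const_pos eta0_pos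
    by (intro mult_left_mono) auto
  finally show "integral {0..TN} (kernel_integrand \<beta>)
                  \<le> phi_upper_const / (- (kernel_exp \<beta> + 1)) * (\<eta>0 * TN powr (- tail_exp))"
    by (simp add: mult_ac)
qed

lemma kernel_integral_bounds_critical:
  assumes \<beta>: "\<beta> = \<gamma> + 1" and T2: "2 \<le> TN"
  shows "integrand_lower_const * (window / (1 + window)) * (\<eta>0 * TN powr (- tail_exp) * ln TN)
           \<le> integral {0..TN} (kernel_integrand \<beta>)"
    and "integral {0..TN} (kernel_integrand \<beta>)
           \<le> 2 * phi_upper_const * (\<eta>0 * TN powr (- tail_exp) * ln TN)"
proof -
  have \<beta>1: "1 < \<beta>" using \<beta> gamma_pos by simp
  have e: "kernel_exp \<beta> = -1" using kernel_exp_plus_one_sgn(2)[OF \<beta>1] \<beta> by simp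
  have "window \<le> window * TN" using T2 window_bounds by simp
  from kernel_integral_ge_primitive[OF \<beta>1 order_refl this order_refl]
  have lower: "integrand_lower_const * \<eta>0 * TN powr (- tail_exp) * (ln (1 + window * TN) - ln (1 + window))
                 \<le> integral {0..TN} (kernel_integrand \<beta>)"
    by (simp add: shifted_powr_primitive_def e)
  have "window / (1 + window) * ln TN \<le> ln (1 + window * TN) - ln (1 + window)"
    using window_bounds T2 by (intro ln_one_plus_mult_ge) auto
  then have "integrand_lower_const * \<eta>0 * TN powr (- tail_exp) * (window / (1 + window) * ln TN)
               \<le> integrand_lower_const * \<eta>0 * TN powr (- tail_exp) * (ln (1 + window * TN) - ln (1 + window))"
    using integrand_lower_const_pos eta0_pos by (intro mult_left_mono) auto
  with lower show "integrand_lower_const * (window / (1 + window)) * (\<eta>0 * TN powr (- tail_exp) * ln TN)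
                     \<le> integral {0..TN} (kernel_integrand \<beta>)"
    by (simp add: mult_ac)
  have "2 * TN \<le> TN * TN" using T2 mult_right_mono[OF T2, of TN] by simp
  then have "1 + TN \<le> TN * TN" using T2 by linarith
  then have "ln (1 + TN) \<le> ln (TN * TN)" using T2 by simp
  also have "\<dots> = 2 * ln TN" using T2 by (simp add: ln_mult)
  finally have log_bound: "ln (1 + TN) \<le> 2 * ln TN" .
  have "integral {0..TN} (kernel_integrand \<beta>) \<le> phi_upper_const * \<eta>0 * TN powr (- tail_exp) * ln (1 + TN)"
    using kernel_integral_le[OF \<beta>1] by (simp add: shifted_powr_primitive_def e)
  also have "\<dots> \<le> phi_upper_const * \<eta>0 * TN powr (- tail_exp) * (2 * ln TN)"
    using log_bound phi_upper_const_pos eta0_pos by (intro mult_left_mono) auto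
  finally show "integral {0..TN} (kernel_integrand \<beta>)
               \<le> 2 * phi_upper_const * (\<eta>0 * TN powr (- tail_exp) * ln TN)"
    by (simp add: mult_ac)
qed

lemma kernel_integral_bounds_kernel_dominated:
  assumes \<beta>: "1 < \<beta>" "\<beta> < \<gamma> + 1" and T2: "2 \<le> TN"
  shows "integrand_lower_const * (window / 2) * (\<eta>0 * TN powr (- (1 - 1 / \<beta>)))
           \<le> integral {0..TN} (kernel_integrand \<beta>)"
    and "integral {0..TN} (kernel_integrand \<beta>)
           \<le> phi_upper_const * 2 powr (kernel_exp \<beta> + 1) / (kernel_exp \<beta> + 1) * (\<eta>0 * TN powr (- (1 - 1 / \<beta>)))"
proof -
  define e where "e = kernel_exp \<beta>"
  have pos: "0 < e + 1" using kernel_exp_plus_one_sgn(3)[OF \<beta>(1)] \<beta> by (simp add: e_def)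
  have neg: "e < 0" using kernel_exp_neg[OF \<beta>(1)] by (simp add: e_def)
  have rate: "TN powr (- tail_exp) * TN powr (e + 1) = TN powr (- (1 - 1 / \<beta>))"
    by (simp add: powr_add[symmetric] e_def kernel_exp_def)
  define c where "c = integrand_lower_const * \<eta>0 * TN powr (- tail_exp)"
  have c: "0 \<le> c" using integrand_lower_const_pos eta0_pos by (simp add: c_def)
  have X: "window \<le> window * TN / 2" "window * TN / 2 \<le> window * TN"
    using T2 window_bounds TN_pos by auto
  have "window * TN \<le> TN / 4" using window_bounds T2 by simp
  then have far: "1 + window * TN \<le> TN" using T2 by linarith
  have "c * TN powr e * (window * TN / 2) \<le> c * (1 + window * TN) powr e * (window * TN / 2)"
    using far neg c window_bounds TN_pos
    by (intro mult_right_mono mult_left_mono powr_mono2') (auto intro: add_pos_nonneg)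
  also have "\<dots> \<le> integral {0..TN} (kernel_integrand \<beta>)"
    using kernel_integral_ge_const[OF \<beta>(1) X order_refl] by (simp add: c_def e_def field_simps)
  finally have "c * TN powr e * (window * TN / 2) \<le> integral {0..TN} (kernel_integrand \<beta>)" .
  moreover have "c * TN powr e * (window * TN / 2)
                   = integrand_lower_const * (window / 2) * (\<eta>0 * TN powr (- (1 - 1 / \<beta>)))"
    unfolding rate[symmetric] using TN_pos by (simp add: c_def powr_add mult_ac)
  ultimately show "integrand_lower_const * (window / 2) * (\<eta>0 * TN powr (- (1 - 1 / \<beta>)))
                     \<le> integral {0..TN} (kernel_integrand \<beta>)"
    by linarith
  have "integral {0..TN} (kernel_integrand \<beta>) \<le> phi_upper_const * \<eta>0 * TN powr (- tail_exp) *
          (shifted_powr_primitive e TN - shifted_powr_primitive e 0)"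
    using kernel_integral_le[OF \<beta>(1)] by (simp add: e_def)
  also have "\<dots> \<le> phi_upper_const * \<eta>0 * TN powr (- tail_exp) * (2 powr (e + 1) * TN powr (e + 1) / (e + 1))"
    using shifted_powr_primitive_diff_le_pos[OF pos] T2 phi_upper_const_pos eta0_pos
    by (intro mult_left_mono) auto
  also have "\<dots> = phi_upper_const * 2 powr (e + 1) / (e + 1) * (\<eta>0 * TN powr (- (1 - 1 / \<beta>)))"
    unfolding rate[symmetric] by (simp add: mult_ac)
  finally show "integral {0..TN} (kernel_integrand \<beta>)
                  \<le> phi_upper_const * 2 powr (kernel_exp \<beta> + 1) / (kernel_exp \<beta> + 1) * (\<eta>0 * TN powr (- (1 - 1 / \<beta>)))"
    by (simp add: e_def)
qed

lemma kernel_integral_comparable: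
  assumes \<beta>: "1 < \<beta>" and T2: "2 \<le> TN"
  defines "R \<equiv> \<eta>0 * TN powr (- (1 - 1 / min \<beta> (\<gamma> + 1))) * (if \<beta> = \<gamma> + 1 then ln TN else 1)"
  shows "kernel_lower_const \<beta> * R \<le> integral {0..TN} (kernel_integrand \<beta>)"
    and "integral {0..TN} (kernel_integrand \<beta>) \<le> kernel_upper_const \<beta> * R"
proof -
  have tail_rate: "1 - 1 / (\<gamma> + 1) = tail_exp"
    using gamma_pos by (simp add: tail_exp_def field_simps)
  consider "\<gamma> + 1 < \<beta>" | "\<beta> = \<gamma> + 1" | "\<beta> < \<gamma> + 1" by linarith
  then have "kernel_lower_const \<beta> * R \<le> integral {0..TN} (kernel_integrand \<beta>) \<and>
             integral {0..TN} (kernel_integrand \<beta>) \<le> kernel_upper_const \<beta> * R"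
  proof cases
    case 1
    then show ?thesis using kernel_integral_bounds_tail_dominated[OF 1 T2]
      by (simp add: R_def kernel_lower_const_def kernel_upper_const_def tail_rate mult_ac)
  next
    case 2
    then show ?thesis using kernel_integral_bounds_critical[OF 2 T2]
      by (simp add: R_def kernel_lower_const_def kernel_upper_const_def tail_rate mult_ac)
  next
    case 3
    then show ?thesis using kernel_integral_bounds_kernel_dominated[OF \<beta> 3 T2]
      by (simp add: R_def kernel_lower_const_def kernel_upper_const_def mult_ac)
  qed
  then show "kernel_lower_const \<beta> * R \<le> integral {0..TN} (kernel_integrand \<beta>)"
    and "integral {0..TN} (kernel_integrand \<beta>) \<le> kernel_upper_const \<beta> * R"
    by auto
qed

end

theorem mainTheorem4:
  fixes s \<beta> \<gamma> \<delta> :: real and \<zeta> :: "real \<Rightarrow> real"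
  assumes "s > 0" and "\<beta> > 1" and "\<gamma> > 0"
    and "lrs_profile \<zeta>" and "power_decay_tail \<zeta> \<gamma> \<delta>"
  shows "\<exists>c C. 0 < c \<and> 0 < C \<and>
    (\<forall>\<eta>0 (N::nat). 0 < \<eta>0 \<longrightarrow> 0 < N \<longrightarrow> lrs_T \<eta>0 \<zeta> N \<ge> 2 \<longrightarrow>
      (let T = lrs_T \<eta>0 \<zeta> N; \<alpha> = min \<beta> (\<gamma> + 1);
           R = T powr (-s) + \<eta>0 * T powr (-(1 - 1 / \<alpha>)) * (if \<beta> = \<gamma> + 1 then ln T else 1)
       in c * R \<le> lrs_F s \<beta> \<eta>0 \<zeta> N \<and> lrs_F s \<beta> \<eta>0 \<zeta> N \<le> C * R))"
proof -
  obtain c1 c2 where "0 < c1" "0 < c2" "0 < \<delta>" "\<delta> < 1"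
    and "\<forall>x\<in>{\<delta>..1}. c1 * (1 - x) powr \<gamma> \<le> \<zeta> x \<and> \<zeta> x \<le> c2 * (1 - x) powr \<gamma>"
    using assms(5) unfolding power_decay_tail_def by auto
  then interpret power_tail_profile \<zeta> \<gamma> \<delta> c1 c2
    using assms by unfold_locales auto
  show ?thesis
  proof (intro exI conjI allI impI)
    show "0 < min ((3/2) powr (-s)) (kernel_lower_const \<beta>)"
      using kernel_lower_const_pos by simp
    show "0 < max 1 (kernel_upper_const \<beta>)" by simp
    fix \<eta>0 N assume h: "0 < \<eta>0" "0 < N" "2 \<le> lrs_T \<eta>0 \<zeta> N"
    then interpret power_tail_schedule \<zeta> \<gamma> \<delta> c1 c2 \<eta>0 N
      by unfold_locales
    have rate_nonneg: "0 \<le> \<eta>0 * lrs_T \<eta>0 \<zeta> N powr (- (1 - 1 / min \<beta> (\<gamma> + 1))) *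
                             (if \<beta> = \<gamma> + 1 then ln (lrs_T \<eta>0 \<zeta> N) else 1)"
      using h by simp
    note bounds = one_plus_powr_add_comparable[OF h(3) assms(1) rate_nonneg
        kernel_integral_comparable[OF assms(2) h(3)]]
    show "let T = lrs_T \<eta>0 \<zeta> N; \<alpha> = min \<beta> (\<gamma> + 1);
            R = T powr (-s) + \<eta>0 * T powr (-(1 - 1 / \<alpha>)) * (if \<beta> = \<gamma> + 1 then ln T else 1)
          in min ((3/2) powr (-s)) (kernel_lower_const \<beta>) * R \<le> lrs_F s \<beta> \<eta>0 \<zeta> N \<and>
             lrs_F s \<beta> \<eta>0 \<zeta> N \<le> max 1 (kernel_upper_const \<beta>) * R"
      unfolding Let_def lrs_F_eq[OF assms(2)] using bounds by simp
  qed
qed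

end
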